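(* Let $a>0$ and let $\epsilon>0$ be sufficiently small. The regularized system $$\dot x=1,\qquad \epsilon\dot v=-a\epsilon v-\sin\!\left(\pi x\left[1+\tfrac12\psi(v)\right]\right)$$ does not possess periodic solutions (i.e. there is no solution with $v(x+T)=v(x)$ for all $x$, for some $T>0$).
   Context: $\psi:\mathbb{R}\to\mathbb{R}$ is a transition function: $C^1$ on $\mathbb{R}$ and $C^2$ on $[-1,1]$, with $\psi(v)=\operatorname{sign}(v)$ for $|v|\ge1$, $\psi'(v)>0$ for $|v|<1$, and $\operatorname{sign}\psi''(v)=-\operatorname{sign}(v)$ at $|v|=1$. *)

theory Defs
  imports "HOL-Analysis.Analysis"
begin

definition transition_fun :: "(real \<Rightarrow> real) \<Rightarrow> bool" where
  "transition_fun \<psi> \<longleftrightarrow>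
     (\<forall>v. \<psi> differentiable (at v)) \<and> continuous_on UNIV (deriv \<psi>) \<and>
     (\<exists>\<psi>2. (\<forall>v\<in>{-1..1}. (deriv \<psi> has_real_derivative \<psi>2 v) (at v within {-1..1})) \<and>
           continuous_on {-1..1} \<psi>2 \<and>
           (\<forall>v. \<bar>v\<bar> = 1 \<longrightarrow> sgn (\<psi>2 v) = - sgn v)) \<and>
     (\<forall>v. \<bar>v\<bar> \<ge> 1 \<longrightarrow> \<psi> v = sgn v) \<and>
     (\<forall>v. \<bar>v\<bar> < 1 \<longrightarrow> deriv \<psi> v > 0)"

end

theory Submission
  imports Defs
begin

text \<open>If v is a T-periodic solution, then so is its derivative, hence the forcing term
sin (x \<beta>(x)) with \<beta> = pi (1 + \<psi> \<circ> v / 2) is T-periodic. Comparing the shifts by T and 2T gives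
sin (T \<beta>(x)) = 0 everywhere, so the continuous frequency \<beta> is a constant \<omega> > 0. The equation
becomes the damped linear oscillator v' = - a v - sin (\<omega> x) / \<epsilon>, whose only periodic solution
is an explicit sinusoid taking both values s and -s for some s > 0. But \<psi> \<circ> v is constant,
which contradicts the strict monotonicity of \<psi>. The argument works for every \<epsilon> > 0.\<close>

lemma sin_shift_twice_invariant:
  fixes t b :: real
  assumes "sin (t + b) = sin t" and "sin (t + 2 * b) = sin t"
  shows "sin b = 0"
proof -
  define u where "u = t + b"
  have sym: "sin (u - b) = sin u" "sin (u + b) = sin u"
    using assms unfolding u_def by (simp_all add: algebra_simps)
  have "sin (u + b) - sin (u - b) = 2 * (cos u * sin b)"
    by (simp add: sin_add sin_diff)
  then have cos_sin: "cos u * sin b = 0" using sym by simp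
  have "sin (u + b) + sin (u - b) = 2 * (sin u * cos b)"
    by (simp add: sin_add sin_diff)
  then have sin_cos: "sin u * (1 - cos b) = 0" using sym by (simp add: algebra_simps)
  show ?thesis
  proof (rule ccontr)
    assume "sin b \<noteq> 0"
    then have "cos u = 0" using cos_sin by simp
    then have "sin u \<noteq> 0" using sin_cos_squared_add[of u] by auto
    then have "cos b = 1" using sin_cos by simp
    then show False using \<open>sin b \<noteq> 0\<close> sin_cos_squared_add[of b] by simp
  qed
qed

lemma sin_zero_continuous_imp_constant:
  fixes g :: "real \<Rightarrow> real"
  assumes "continuous_on UNIV g" and "\<And>x. sin (g x) = 0"
  shows "g x = g y"
proof -
  have "g constant_on UNIV"
  proof (rule continuous_discrete_range_constant[OF connected_UNIV assms(1)])
    fix x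
    have "pi \<le> norm (g y - g x)" if "g y \<noteq> g x" for y
    proof -
      obtain i j :: int where "g x = i * pi" "g y = j * pi"
        using assms(2) sin_zero_iff_int2 by metis
      moreover from that this have "1 \<le> \<bar>j - i\<bar>" by auto
      ultimately show ?thesis
        using mult_right_mono[of 1 "\<bar>real_of_int (j - i)\<bar>" pi]
        by (simp add: abs_mult left_diff_distrib[symmetric])
    qed
    then show "\<exists>e>0. \<forall>y. y \<in> UNIV \<and> g y \<noteq> g x \<longrightarrow> e \<le> norm (g y - g x)"
      using pi_gt_zero by blast
  qed
  then show ?thesis by (metis constant_on_def UNIV_I)
qed

lemma has_real_derivative_periodic:
  fixes f f' :: "real \<Rightarrow> real"
  assumes "\<And>x. f (x + T) = f x" and "\<And>x. (f has_real_derivative f' x) (at x)"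
  shows "f' (x + T) = f' x"
proof -
  have "((\<lambda>y. f (y + T)) has_real_derivative f' (x + T)) (at x)"
    using assms(2)[of "x + T"] DERIV_shift by blast
  moreover have "(\<lambda>y. f (y + T)) = f" using assms(1) by auto
  ultimately show ?thesis using assms(2)[of x] DERIV_unique by metis
qed

lemma periodic_chirp_imp_constant:
  fixes \<beta> :: "real \<Rightarrow> real"
  assumes "T \<noteq> 0" and "continuous_on UNIV \<beta>" and "\<And>x. \<beta> (x + T) = \<beta> x"
    and "\<And>x. sin ((x + T) * \<beta> (x + T)) = sin (x * \<beta> x)"
  shows "\<beta> x = \<beta> y"
proof -
  have "sin (T * \<beta> x) = 0" for x
  proof (rule sin_shift_twice_invariant)
    show "sin (x * \<beta> x + T * \<beta> x) = sin (x * \<beta> x)"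
      using assms(3,4)[of x] by (simp add: algebra_simps)
    have "sin ((x + 2 * T) * \<beta> (x + 2 * T)) = sin (x * \<beta> x)"
      using assms(4)[of "x + T"] assms(4)[of x] by (simp add: algebra_simps)
    moreover have "\<beta> (x + 2 * T) = \<beta> x"
      using assms(3)[of "x + T"] assms(3)[of x] by (simp add: algebra_simps)
    ultimately show "sin (x * \<beta> x + 2 * (T * \<beta> x)) = sin (x * \<beta> x)"
      by (simp add: algebra_simps)
  qed
  moreover have "continuous_on UNIV (\<lambda>x. T * \<beta> x)"
    using assms(2) by (intro continuous_intros)
  ultimately have "T * \<beta> x = T * \<beta> y"
    using sin_zero_continuous_imp_constant[of "\<lambda>x. T * \<beta> x"] by blast
  then show ?thesis using assms(1) by simp
qed

lemma linear_ode_periodic_solution_unique: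
  fixes v p g :: "real \<Rightarrow> real"
  assumes "a * T \<noteq> 0"
    and "\<And>x. (v has_real_derivative - a * v x + g x) (at x)"
    and "\<And>x. (p has_real_derivative - a * p x + g x) (at x)"
    and "v T = v 0" and "p T = p 0"
  shows "v x = p x"
proof -
  define q where "q x = exp (a * x) * (v x - p x)" for x
  have "(q has_real_derivative 0) (at x)" for x
  proof -
    have "(q has_real_derivative exp (a * x) * a * (v x - p x)
            + exp (a * x) * ((- a * v x + g x) - (- a * p x + g x))) (at x)"
      unfolding q_def by (auto intro!: derivative_eq_intros assms(2,3))
    then show ?thesis by (simp add: algebra_simps)
  qed
  then have q_const: "q x = q y" for x y using DERIV_isconst_all by blast
  have "exp (a * T) \<noteq> 1" using assms(1) by simp
  moreover have "exp (a * T) * (v 0 - p 0) = v 0 - p 0"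
    using q_const[of T 0] assms(4,5) unfolding q_def by simp
  ultimately have "q 0 = 0" unfolding q_def by simp
  then show ?thesis using q_const[of x 0] unfolding q_def by simp
qed

lemma forced_oscillation_has_real_derivative:
  fixes a k \<omega> :: real
  assumes "\<omega>\<^sup>2 + a\<^sup>2 \<noteq> 0"
  defines "p \<equiv> \<lambda>x. k / (\<omega>\<^sup>2 + a\<^sup>2) * (\<omega> * cos (\<omega> * x) - a * sin (\<omega> * x))"
  shows "(p has_real_derivative - a * p x - k * sin (\<omega> * x)) (at x)"
proof -
  have "(p has_real_derivative k / (\<omega>\<^sup>2 + a\<^sup>2) * (- \<omega> * sin (\<omega> * x) * \<omega> - a * cos (\<omega> * x) * \<omega>)) (at x)"
    unfolding p_def using assms(1) by (auto intro!: derivative_eq_intros)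
  moreover have "k / (\<omega>\<^sup>2 + a\<^sup>2) * (- \<omega> * sin (\<omega> * x) * \<omega> - a * cos (\<omega> * x) * \<omega>)
      = - a * p x - k * sin (\<omega> * x)"
    unfolding p_def using assms(1) by (auto simp: field_simps power2_eq_square)
  ultimately show ?thesis by simp
qed

lemma transition_fun_isCont: "transition_fun \<psi> \<Longrightarrow> isCont \<psi> x"
  unfolding transition_fun_def by (simp add: differentiable_imp_continuous_within)

lemma transition_fun_strict_mono_on:
  assumes "transition_fun \<psi>"
  shows "strict_mono_on {-1..1} \<psi>"
proof (rule strict_mono_onI)
  fix s t :: real
  assume "s \<in> {-1..1}" "t \<in> {-1..1}" "s < t"
  have "\<psi> differentiable (at x)" for x using assms unfolding transition_fun_def by simp
  moreover have "continuous_on {s..t} \<psi>"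
    using transition_fun_isCont[OF assms] continuous_at_imp_continuous_on by blast
  ultimately obtain l z where z: "s < z" "z < t" "(\<psi> has_real_derivative l) (at z)"
    and mvt: "\<psi> t - \<psi> s = (t - s) * l"
    using MVT[OF \<open>s < t\<close>] by blast
  have "l = deriv \<psi> z" using z(3) DERIV_imp_deriv by metis
  also have "\<dots> > 0"
    using assms z(1,2) \<open>s \<in> {-1..1}\<close> \<open>t \<in> {-1..1}\<close> unfolding transition_fun_def by auto
  finally have "0 < (t - s) * l" using \<open>s < t\<close> by simp
  then show "\<psi> s < \<psi> t" using mvt by simp
qed

lemma transition_fun_ge_minus_one:
  assumes "transition_fun \<psi>"
  shows "-1 \<le> \<psi> x"
proof (cases "\<bar>x\<bar> < 1")
  case True
  have "\<psi> (-1) = -1" using assms unfolding transition_fun_def by auto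
  moreover have "\<psi> (-1) < \<psi> x"
    using strict_mono_onD[OF transition_fun_strict_mono_on[OF assms], of "-1" x] True by simp
  ultimately show ?thesis by simp
next
  case False
  then have "\<psi> x = sgn x" using assms unfolding transition_fun_def by auto
  then show ?thesis using False by (auto simp: sgn_if)
qed

lemma transition_fun_neg_less:
  assumes "transition_fun \<psi>" and "0 < s"
  shows "\<psi> (- s) < \<psi> s"
proof (cases "s < 1")
  case True
  then show ?thesis
    using strict_mono_onD[OF transition_fun_strict_mono_on[OF assms(1)], of "- s" s] assms(2)
    by simp
next
  case False
  then have "\<psi> s = 1" "\<psi> (- s) = -1" using assms unfolding transition_fun_def by auto
  then show ?thesis by simp
qed

lemma periodic_solution_psi_constant:
  fixes \<psi> v :: "real \<Rightarrow> real"
  assumes "transition_fun \<psi>" and "\<epsilon> \<noteq> 0" and "T \<noteq> 0"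
    and ode: "\<And>x. (v has_real_derivative
                (- a * \<epsilon> * v x - sin (pi * x * (1 + \<psi> (v x) / 2))) / \<epsilon>) (at x)"
    and periodic: "\<And>x. v (x + T) = v x"
  shows "\<psi> (v x) = \<psi> (v y)"
proof -
  define \<beta> where "\<beta> x = pi * (1 + \<psi> (v x) / 2)" for x
  have "\<beta> x = \<beta> y"
  proof (rule periodic_chirp_imp_constant[where \<beta> = \<beta>, OF \<open>T \<noteq> 0\<close>])
    have "isCont (\<lambda>x. \<psi> (v x)) x" for x
      using isCont_o2[OF DERIV_isCont[OF ode] transition_fun_isCont[OF assms(1)]] .
    then show "continuous_on UNIV \<beta>"
      unfolding \<beta>_def by (auto intro!: continuous_at_imp_continuous_on continuous_intros)
    show "\<beta> (x + T) = \<beta> x" for x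
      using periodic by (simp add: \<beta>_def)
    show "sin ((x + T) * \<beta> (x + T)) = sin (x * \<beta> x)" for x
      using has_real_derivative_periodic[OF periodic ode, of x] periodic[of x] assms(2)
      unfolding \<beta>_def by (simp add: divide_simps mult_ac)
  qed
  then show ?thesis unfolding \<beta>_def by simp
qed

lemma no_periodic_solution:
  fixes \<psi> v :: "real \<Rightarrow> real"
  assumes "transition_fun \<psi>" and "0 < a" and "0 < \<epsilon>" and "0 < T"
    and ode: "\<And>x. (v has_real_derivative
                (- a * \<epsilon> * v x - sin (pi * x * (1 + \<psi> (v x) / 2))) / \<epsilon>) (at x)"
    and periodic: "\<And>x. v (x + T) = v x"
  shows False
proof -
  define c where "c = \<psi> (v 0)"
  define \<omega> where "\<omega> = pi * (1 + c / 2)"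
  have \<psi>_const: "\<psi> (v x) = c" for x
    using periodic_solution_psi_constant[of \<psi> \<epsilon> T v a x 0] assms ode periodic
    unfolding c_def by simp
  have "0 < 1 + c / 2" using transition_fun_ge_minus_one[OF assms(1), of "v 0"] unfolding c_def by linarith
  then have "0 < \<omega>" unfolding \<omega>_def by simp
  have v_ode: "(v has_real_derivative - a * v x + - sin (\<omega> * x) / \<epsilon>) (at x)" for x
    using ode[of x] assms(3) unfolding \<psi>_const \<omega>_def by (simp add: field_simps)
  have sin_periodic: "sin (\<omega> * (x + T)) = sin (\<omega> * x)" for x
    using has_real_derivative_periodic[OF periodic v_ode, of x] periodic[of x] assms(3)
    by simp
  have cos_periodic: "\<omega> * cos (\<omega> * (x + T)) = \<omega> * cos (\<omega> * x)" for x
    by (rule has_real_derivative_periodic[where f = "\<lambda>x. sin (\<omega> * x)", OF sin_periodic])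
      (auto intro!: derivative_eq_intros simp: mult.commute)
  define p where "p x = 1 / \<epsilon> / (\<omega>\<^sup>2 + a\<^sup>2) * (\<omega> * cos (\<omega> * x) - a * sin (\<omega> * x))" for x
  have "0 < \<omega>\<^sup>2 + a\<^sup>2" using \<open>0 < \<omega>\<close> by (simp add: add_pos_nonneg)
  then have "\<omega>\<^sup>2 + a\<^sup>2 \<noteq> 0" by linarith
  from forced_oscillation_has_real_derivative[OF this, of "1 / \<epsilon>"]
  have p_ode: "(p has_real_derivative - a * p x + - sin (\<omega> * x) / \<epsilon>) (at x)" for x
    unfolding p_def by simp
  have "p T = p 0" unfolding p_def using sin_periodic[of 0] cos_periodic[of 0] \<open>0 < \<omega>\<close> by simp
  moreover have "a * T \<noteq> 0" and "v T = v 0" using assms(2,4) periodic[of 0] by simp_all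
  ultimately have v_eq_p: "v x = p x" for x
    using linear_ode_periodic_solution_unique[OF _ v_ode p_ode] by blast
  define s where "s = a / \<epsilon> / (\<omega>\<^sup>2 + a\<^sup>2)"
  have "0 < s" unfolding s_def using assms(2,3) \<open>0 < \<omega>\<^sup>2 + a\<^sup>2\<close> by simp
  define x\<^sub>0 where "x\<^sub>0 = pi / (2 * \<omega>)"
  have "\<omega> * x\<^sub>0 = pi / 2" unfolding x\<^sub>0_def using \<open>0 < \<omega>\<close> by simp
  then have "sin (\<omega> * x\<^sub>0) = 1" "cos (\<omega> * x\<^sub>0) = 0"
    and "sin (\<omega> * - x\<^sub>0) = -1" "cos (\<omega> * - x\<^sub>0) = 0"
    by (simp_all only: mult_minus_right sin_minus cos_minus sin_pi_half cos_pi_half)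
  then have "v x\<^sub>0 = - s" "v (- x\<^sub>0) = s"
    unfolding v_eq_p p_def s_def by simp_all
  then have "\<psi> (- s) = \<psi> s" using \<psi>_const by metis
  then show False using transition_fun_neg_less[OF assms(1) \<open>0 < s\<close>] by simp
qed

theorem theorem7:
  fixes \<psi> :: "real \<Rightarrow> real" and a :: real
  assumes "transition_fun \<psi>" and "a > 0"
  shows "\<exists>\<epsilon>0>0. \<forall>\<epsilon>. 0 < \<epsilon> \<and> \<epsilon> < \<epsilon>0 \<longrightarrow>
           \<not> (\<exists>(v :: real \<Rightarrow> real) (T :: real). T > 0 \<and>
                (\<forall>x. (v has_real_derivative
                        (- a * \<epsilon> * v x - sin (pi * x * (1 + \<psi> (v x) / 2))) / \<epsilon>) (at x)) \<and>
                (\<forall>x. v (x + T) = v x))"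
proof (intro exI[of _ 1] conjI allI impI notI)
  fix \<epsilon> :: real
  assume "0 < \<epsilon> \<and> \<epsilon> < 1"
    and "\<exists>v T. T > 0 \<and>
           (\<forall>x. (v has_real_derivative
                   (- a * \<epsilon> * v x - sin (pi * x * (1 + \<psi> (v x) / 2))) / \<epsilon>) (at x)) \<and>
           (\<forall>x. v (x + T) = v x)"
  then show False using no_periodic_solution[OF assms] by blast
qed simp

end
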